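(* Let $X$ be an $n$-dimensional polyhedral normed space. Suppose that $Y \subseteq X$ is a $k$-dimensional subspace, $1 \leq k \leq n-1$, which is in general position and satisfies $\lambda(Y, X)=1$. Then there is a unique projection $P: X \to Y$ with $\|P\|=1$.
   Context: A normed space $X=(\mathbb{R}^n,\|\cdot\|)$ is polyhedral if its unit ball $B_X$ is a convex polytope; write $\mathrm{ext}\, B_X=\{x_1,\dots,x_N\}$ and $\mathrm{ext}\, B_{X^*}=\{f_1,\dots,f_M\}$ for the extreme points of the unit balls of $X$ and $X^*$. Two linear subspaces $Y,Z\subseteq\mathbb{R}^n$ are in general position if $\dim \mathrm{lin}(Y\cup Z)=\min(\dim Y+\dim Z,n)$. A subspace $Y$ is in general position if it is in general position with every subspace $\mathrm{lin}\{x_i : i\in I\}$, $I\subseteq\{1,\dots,N\}$, and every subspace $\bigcap_{i\in I}\ker f_i$, $I\subseteq\{1,\dots,M\}$. A projection onto $Y$ is a linear $P:X\to Y$ with $P|_Y=\mathrm{id}_Y$, and $\lambda(Y,X)$ is the infimum of the operator norms of such projections. *)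

theory Defs
  imports "HOL-Analysis.Analysis"
begin

definition is_norm :: "('a::real_vector \<Rightarrow> real) \<Rightarrow> bool" where
  "is_norm N \<longleftrightarrow> (\<forall>x. N x = 0 \<longleftrightarrow> x = 0) \<and> (\<forall>c x. N (c *\<^sub>R x) = \<bar>c\<bar> * N x)
     \<and> (\<forall>x y. N (x + y) \<le> N x + N y)"

definition unit_ball :: "('a::real_vector \<Rightarrow> real) \<Rightarrow> 'a set" where
  "unit_ball N = {x. N x \<le> 1}"

text \<open>Unit ball of the dual space; a linear functional on real^n is identified
  with the vector f via x \<mapsto> f \<bullet> x.\<close>
definition dual_unit_ball :: "('a::real_inner \<Rightarrow> real) \<Rightarrow> 'a set" where
  "dual_unit_ball N = {f. \<forall>x. N x \<le> 1 \<longrightarrow> f \<bullet> x \<le> 1}"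

definition polyhedral_norm :: "('a::real_vector \<Rightarrow> real) \<Rightarrow> bool" where
  "polyhedral_norm N \<longleftrightarrow> is_norm N \<and> polytope (unit_ball N)"

definition ext_ball :: "('a::real_vector \<Rightarrow> real) \<Rightarrow> 'a set" where
  "ext_ball N = {x. x extreme_point_of (unit_ball N)}"

definition ext_dual_ball :: "('a::real_inner \<Rightarrow> real) \<Rightarrow> 'a set" where
  "ext_dual_ball N = {f. f extreme_point_of (dual_unit_ball N)}"

definition in_gen_pos :: "'a::euclidean_space set \<Rightarrow> 'a set \<Rightarrow> bool" where
  "in_gen_pos Y Z \<longleftrightarrow> dim (span (Y \<union> Z)) = min (dim Y + dim Z) DIM('a)"

definition subspace_gen_pos :: "('a::euclidean_space \<Rightarrow> real) \<Rightarrow> 'a set \<Rightarrow> bool" where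
  "subspace_gen_pos N Y \<longleftrightarrow>
     (\<forall>S \<subseteq> ext_ball N. in_gen_pos Y (span S)) \<and>
     (\<forall>F \<subseteq> ext_dual_ball N. in_gen_pos Y {x. \<forall>f\<in>F. f \<bullet> x = 0})"

definition is_projection :: "'a::real_vector set \<Rightarrow> ('a \<Rightarrow> 'a) \<Rightarrow> bool" where
  "is_projection Y P \<longleftrightarrow> linear P \<and> (\<forall>x. P x \<in> Y) \<and> (\<forall>y\<in>Y. P y = y)"

definition op_norm :: "('a::real_vector \<Rightarrow> real) \<Rightarrow> ('a \<Rightarrow> 'a) \<Rightarrow> real" where
  "op_norm N P = Sup {N (P x) | x. N x \<le> 1}"

definition proj_const :: "('a::real_vector \<Rightarrow> real) \<Rightarrow> 'a set \<Rightarrow> real" where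
  "proj_const N Y = Inf {op_norm N P | P. is_projection Y P}"

end

theory Submission
  imports Defs
begin

(* Existence: the projections onto Y of norm at most c form a compact set of operators, and these
   sets decrease to a nonempty intersection as c decreases to the projection constant.

   Uniqueness: call a point generic if it lies in no proper subspace spanned by extreme points of
   the unit ball. Since the unit ball has finitely many extreme points and Y is in general
   position, Y contains a generic point z, and then all points z + t u except finitely many are
   generic. At a generic point p the norming functional f is unique, so every contraction fixing p
   leaves f invariant. If P and Q are norm-one projections and u = P x - Q x is nonzero, take
   p = z + t u generic with t large: then f u = 0, hence N p = f p = f z <= N z, while
   N p >= t N u - N z. *)

lemma is_norm_scaleR: "is_norm N \<Longrightarrow> N (c *\<^sub>R x) = \<bar>c\<bar> * N x"
  by (simp add: is_norm_def)

lemma is_norm_triangle: "is_norm N \<Longrightarrow> N (x + y) \<le> N x + N y"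
  by (simp add: is_norm_def)

lemma is_norm_eq_0_iff: "is_norm N \<Longrightarrow> N x = 0 \<longleftrightarrow> x = 0"
  by (simp add: is_norm_def)

lemma is_norm_0: "is_norm N \<Longrightarrow> N 0 = 0"
  by (simp add: is_norm_def)

lemma is_norm_minus: "is_norm N \<Longrightarrow> N (- x) = N x"
  using is_norm_scaleR[of N "-1" x] by simp

lemma is_norm_nonneg: "is_norm N \<Longrightarrow> 0 \<le> N x"
  using is_norm_triangle[of N x "- x"] is_norm_minus[of N x] is_norm_0[of N] by simp

lemma is_norm_pos: "is_norm N \<Longrightarrow> x \<noteq> 0 \<Longrightarrow> 0 < N x"
  using is_norm_nonneg[of N x] is_norm_eq_0_iff[of N x] by linarith

lemma is_norm_triangle_diff: "is_norm N \<Longrightarrow> N x - N y \<le> N (x - y)"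
  using is_norm_triangle[of N "x - y" y] by simp

lemma is_norm_normalize: "is_norm N \<Longrightarrow> x \<noteq> 0 \<Longrightarrow> N ((1 / N x) *\<^sub>R x) = 1"
  using is_norm_pos[of N x] by (simp add: is_norm_scaleR)

lemma is_norm_sum: "is_norm N \<Longrightarrow> N (sum f A) \<le> (\<Sum>i\<in>A. N (f i))"
proof (induction A rule: infinite_finite_induct)
  case (insert a A)
  then show ?case using is_norm_triangle[of N "f a" "sum f A"] by simp
qed (simp_all add: is_norm_0)

lemma homogeneous_le_norm_if_le_on_unit_ball:
  assumes "is_norm N" and bound: "\<And>x. N x \<le> 1 \<Longrightarrow> \<phi> x \<le> c"
    and homogeneous: "\<And>t x. 0 < t \<Longrightarrow> \<phi> (t *\<^sub>R x) = t * \<phi> x"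
  shows "\<phi> x \<le> c * N x"
proof (cases "x = 0")
  case True
  have "\<phi> 0 = 2 * \<phi> 0" using homogeneous[of 2 0] by simp
  then show ?thesis using True is_norm_0[OF assms(1)] by simp
next
  case False
  then have pos: "0 < N x" by (rule is_norm_pos[OF assms(1)])
  have "\<phi> ((1 / N x) *\<^sub>R x) \<le> c" using bound is_norm_normalize[OF assms(1) False] by simp
  then have "\<phi> x / N x \<le> c" using homogeneous pos by simp
  then show ?thesis using pos by (simp add: divide_le_eq mult.commute)
qed

lemma dual_unit_ball_inner_le:
  "is_norm N \<Longrightarrow> f \<in> dual_unit_ball N \<Longrightarrow> f \<bullet> x \<le> N x"
  using homogeneous_le_norm_if_le_on_unit_ball[of N "(\<bullet>) f" 1]
  by (simp add: dual_unit_ball_def)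

lemma contraction_le_norm:
  assumes "is_norm N" "linear L" "\<And>x. N x \<le> 1 \<Longrightarrow> N (L x) \<le> c"
  shows "N (L x) \<le> c * N x"
  using homogeneous_le_norm_if_le_on_unit_ball[of N "\<lambda>x. N (L x)" c] assms
  by (simp add: linear_scale is_norm_scaleR)

lemma is_norm_le_const_norm:
  fixes N :: "'a::euclidean_space \<Rightarrow> real"
  assumes "is_norm N"
  shows "\<exists>C>0. \<forall>x. N x \<le> C * norm x"
proof (intro exI conjI allI)
  define C where "C = 1 + (\<Sum>b\<in>Basis. N b)"
  show "0 < C" unfolding C_def using is_norm_nonneg[OF assms] by (simp add: sum_nonneg add_pos_nonneg)
  fix x :: 'a
  have "N x = N (\<Sum>b\<in>Basis. (x \<bullet> b) *\<^sub>R b)" by (simp add: euclidean_representation)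
  also have "\<dots> \<le> (\<Sum>b\<in>Basis. \<bar>x \<bullet> b\<bar> * N b)"
    using is_norm_sum[OF assms, of "\<lambda>b. (x \<bullet> b) *\<^sub>R b" Basis]
    by (simp add: is_norm_scaleR[OF assms])
  also have "\<dots> \<le> (\<Sum>b\<in>Basis. norm x * N b)"
    by (intro sum_mono mult_right_mono Basis_le_norm is_norm_nonneg[OF assms])
  also have "\<dots> \<le> C * norm x" by (simp add: C_def sum_distrib_left algebra_simps)
  finally show "N x \<le> C * norm x" .
qed

lemma continuous_on_is_norm:
  fixes N :: "'a::euclidean_space \<Rightarrow> real"
  assumes "is_norm N"
  shows "continuous_on S N"
proof -
  obtain C where C: "0 < C" "\<And>x. N x \<le> C * norm x" using is_norm_le_const_norm[OF assms] by blast
  have "C-lipschitz_on S N"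
  proof (rule lipschitz_onI)
    fix x y
    have "N a - N b \<le> C * dist a b" for a b
      using is_norm_triangle_diff[OF assms, of a b] C(2)[of "a - b"] by (simp add: dist_norm)
    from this[of x y] this[of y x] show "dist (N x) (N y) \<le> C * dist x y"
      by (simp add: dist_real_def dist_commute)
  qed (use C in simp)
  then show ?thesis by (rule lipschitz_on_continuous_on)
qed

lemma convex_unit_ball: "is_norm N \<Longrightarrow> convex (unit_ball N)"
proof (unfold convex_def unit_ball_def, clarsimp)
  fix x y and u v :: real
  assume n: "is_norm N" and "N x \<le> 1" "N y \<le> 1" "0 \<le> u" "0 \<le> v" "u + v = 1"
  then have "u * N x + v * N y \<le> u * 1 + v * 1" by (intro add_mono mult_left_mono)
  then show "N (u *\<^sub>R x + v *\<^sub>R y) \<le> 1"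
    using is_norm_triangle[OF n, of "u *\<^sub>R x" "v *\<^sub>R y"] \<open>0 \<le> u\<close> \<open>0 \<le> v\<close> \<open>u + v = 1\<close>
    by (simp add: is_norm_scaleR[OF n])
qed

lemma closed_unit_ball:
  fixes N :: "'a::euclidean_space \<Rightarrow> real"
  shows "is_norm N \<Longrightarrow> closed (unit_ball N)"
  unfolding unit_ball_def by (intro closed_Collect_le continuous_on_is_norm continuous_on_const)

lemma zero_in_interior_unit_ball:
  fixes N :: "'a::euclidean_space \<Rightarrow> real"
  assumes "is_norm N"
  shows "0 \<in> interior (unit_ball N)"
proof -
  obtain C where C: "0 < C" "\<And>x. N x \<le> C * norm x" using is_norm_le_const_norm[OF assms] by blast
  have "ball 0 (1 / C) \<subseteq> unit_ball N"
  proof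
    fix x :: 'a assume "x \<in> ball 0 (1 / C)"
    then have "C * norm x \<le> 1" using C(1) by (simp add: field_simps)
    then show "x \<in> unit_ball N" using C(2)[of x] by (simp add: unit_ball_def)
  qed
  then show ?thesis
    using C(1) by (meson centre_in_ball divide_pos_pos interior_maximal open_ball subsetD zero_less_one)
qed

lemma exists_norming_functional:
  fixes N :: "'a::euclidean_space \<Rightarrow> real"
  assumes n: "is_norm N" and "N y = 1"
  shows "\<exists>f\<in>dual_unit_ball N. f \<bullet> y = 1"
proof -
  let ?B = "unit_ball N"
  have interior: "rel_interior ?B = interior ?B"
    using zero_in_interior_unit_ball[OF n] rel_interior_nonempty_interior by blast
  have "y \<notin> interior ?B"
  proof
    assume "y \<in> interior ?B"
    then obtain e where e: "0 < e" "ball y e \<subseteq> ?B" by (meson mem_interior)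
    have "y \<noteq> 0" using \<open>N y = 1\<close> is_norm_0[OF n] by auto
    define d where "d = e / (2 * norm y)"
    have "0 < d" using e \<open>y \<noteq> 0\<close> by (simp add: d_def)
    have "dist y ((1 + d) *\<^sub>R y) < e"
      using e \<open>y \<noteq> 0\<close> by (simp add: dist_norm algebra_simps d_def)
    then have "(1 + d) *\<^sub>R y \<in> ?B" using e by auto
    then show False using \<open>N y = 1\<close> \<open>0 < d\<close> by (simp add: unit_ball_def is_norm_scaleR[OF n])
  qed
  moreover have "y \<in> closure ?B" using closed_unit_ball[OF n] \<open>N y = 1\<close> by (simp add: unit_ball_def)
  ultimately obtain a where a: "\<And>z. z \<in> closure ?B \<Longrightarrow> a \<bullet> y \<le> a \<bullet> z"
      "\<And>z. z \<in> rel_interior ?B \<Longrightarrow> a \<bullet> y < a \<bullet> z"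
    using supporting_hyperplane_relative_frontier[OF convex_unit_ball[OF n]] interior by metis
  have "a \<bullet> y < 0" using a(2)[of 0] zero_in_interior_unit_ball[OF n] interior by simp
  have "(1 / (a \<bullet> y)) *\<^sub>R a \<in> dual_unit_ball N"
  proof (unfold dual_unit_ball_def, intro CollectI allI impI)
    fix z assume "N z \<le> 1"
    then have "a \<bullet> y \<le> a \<bullet> z" using a(1) closure_subset by (force simp: unit_ball_def)
    then show "(1 / (a \<bullet> y)) *\<^sub>R a \<bullet> z \<le> 1" using \<open>a \<bullet> y < 0\<close> by (simp add: field_simps)
  qed
  then show ?thesis using \<open>a \<bullet> y < 0\<close> by force
qed

lemma norm_le_const_polyhedral_norm:
  fixes N :: "'a::euclidean_space \<Rightarrow> real"
  assumes "polyhedral_norm N"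
  shows "\<exists>R>0. \<forall>x. norm x \<le> R * N x"
proof -
  have n: "is_norm N" and "bounded (unit_ball N)"
    using assms polytope_imp_compact compact_imp_bounded by (auto simp: polyhedral_norm_def)
  then obtain R where "0 < R" "\<And>x. x \<in> unit_ball N \<Longrightarrow> norm x \<le> R" by (auto simp: bounded_pos)
  then show ?thesis
    using homogeneous_le_norm_if_le_on_unit_ball[OF n, of norm R] by (auto simp: unit_ball_def)
qed

lemma op_norm_le_iff:
  fixes N :: "'a::euclidean_space \<Rightarrow> real"
  assumes "polyhedral_norm N" "linear P"
  shows "op_norm N P \<le> c \<longleftrightarrow> (\<forall>x. N x \<le> 1 \<longrightarrow> N (P x) \<le> c)"
proof -
  have n: "is_norm N" and "compact (unit_ball N)"
    using assms(1) polytope_imp_compact by (auto simp: polyhedral_norm_def)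
  moreover have "continuous_on (unit_ball N) (\<lambda>x. N (P x))"
    using assms(2) by (intro continuous_on_compose2[OF continuous_on_is_norm[OF n]] linear_continuous_on)
      (auto simp: linear_conv_bounded_linear)
  ultimately have "bdd_above ((\<lambda>x. N (P x)) ` unit_ball N)"
    by (intro bounded_imp_bdd_above compact_imp_bounded compact_continuous_image)
  moreover have "(\<lambda>x. N (P x)) ` unit_ball N = {N (P x) | x. N x \<le> 1}"
    by (auto simp: unit_ball_def)
  moreover have "N (P 0) \<in> {N (P x) | x. N x \<le> 1}" using is_norm_0[OF n] by force
  ultimately show ?thesis unfolding op_norm_def by (subst cSup_le_iff) auto
qed

lemma op_norm_nonneg:
  fixes N :: "'a::euclidean_space \<Rightarrow> real"
  assumes "polyhedral_norm N" "linear P"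
  shows "0 \<le> op_norm N P"
proof -
  have "is_norm N" using assms(1) by (simp add: polyhedral_norm_def)
  then have "N (P 0) = 0" "N 0 \<le> 1" using linear_0[OF assms(2)] by (simp_all add: is_norm_0)
  then show ?thesis using op_norm_le_iff[OF assms, of "op_norm N P"] by fastforce
qed

lemma projection_exists:
  "subspace (Y :: 'a::euclidean_space set) \<Longrightarrow> \<exists>P. is_projection Y P"
  using linear_exists_left_inverse_on[OF linear_id, of Y] by (auto simp: is_projection_def)

lemma proj_const_le_op_norm:
  fixes N :: "'a::euclidean_space \<Rightarrow> real"
  assumes "polyhedral_norm N" "is_projection Y P"
  shows "proj_const N Y \<le> op_norm N P"
  unfolding proj_const_def using assms op_norm_nonneg[OF assms(1)]
  by (intro cInf_lower bdd_belowI[where m = 0]) (auto simp: is_projection_def)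

lemma exists_projection_op_norm_less:
  fixes N :: "'a::euclidean_space \<Rightarrow> real"
  assumes "polyhedral_norm N" "subspace Y" "proj_const N Y < c"
  shows "\<exists>P. is_projection Y P \<and> op_norm N P < c"
proof -
  have "{op_norm N P | P. is_projection Y P} \<noteq> {}" using projection_exists[OF assms(2)] by blast
  moreover have "bdd_below {op_norm N P | P. is_projection Y P}"
    using op_norm_nonneg[OF assms(1)] by (intro bdd_belowI[where m = 0]) (auto simp: is_projection_def)
  ultimately show ?thesis using assms(3) by (auto simp: proj_const_def cInf_less_iff)
qed

lemma linear_blinfun_apply: "linear (blinfun_apply A)"
  by (rule bounded_linear.linear[OF blinfun.bounded_linear_right])

definition projection_sublevel ::
    "('a::euclidean_space \<Rightarrow> real) \<Rightarrow> 'a set \<Rightarrow> real \<Rightarrow> ('a \<Rightarrow>\<^sub>L 'a) set" where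
  "projection_sublevel N Y c =
    {A. is_projection Y (blinfun_apply A) \<and> op_norm N (blinfun_apply A) \<le> c}"

lemma projection_sublevel_mono:
  "c \<le> d \<Longrightarrow> projection_sublevel N Y c \<subseteq> projection_sublevel N Y d"
  by (auto simp: projection_sublevel_def)

lemma closed_projection_sublevel:
  fixes N :: "'a::euclidean_space \<Rightarrow> real"
  assumes "polyhedral_norm N" "subspace Y"
  shows "closed (projection_sublevel N Y c)"
proof -
  have n: "is_norm N" using assms(1) by (simp add: polyhedral_norm_def)
  have "projection_sublevel N Y c =
      {A :: 'a \<Rightarrow>\<^sub>L 'a. \<forall>x. A x \<in> Y \<and> (x \<in> Y \<longrightarrow> A x = x) \<and> (N x \<le> 1 \<longrightarrow> N (A x) \<le> c)}"
    by (auto simp: projection_sublevel_def is_projection_def op_norm_le_iff[OF assms(1)]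
        linear_blinfun_apply)
  moreover have "closed {A :: 'a \<Rightarrow>\<^sub>L 'a. A x \<in> Y}" for x
    using continuous_closed_vimage[OF closed_subspace[OF assms(2)], of "\<lambda>A. blinfun_apply A x"]
      bounded_linear.continuous[OF bounded_linear_apply_blinfun continuous_ident]
    unfolding vimage_def by blast
  moreover have "closed {A :: 'a \<Rightarrow>\<^sub>L 'a. N (A x) \<le> c}" for x
    by (intro closed_Collect_le continuous_on_compose2[OF continuous_on_is_norm[OF n]]
        continuous_intros) auto
  moreover have "closed {A :: 'a \<Rightarrow>\<^sub>L 'a. A x = x}" for x
    by (intro closed_Collect_eq continuous_intros)
  ultimately show ?thesis
    by (simp only:) (intro closed_Collect_all closed_Collect_conj closed_Collect_imp open_Collect_const)
qed

lemma bounded_projection_sublevel: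
  fixes N :: "'a::euclidean_space \<Rightarrow> real"
  assumes "polyhedral_norm N"
  shows "bounded (projection_sublevel N Y c)"
proof -
  have n: "is_norm N" using assms by (simp add: polyhedral_norm_def)
  obtain C where C: "0 < C" "\<And>x. N x \<le> C * norm x" using is_norm_le_const_norm[OF n] by blast
  obtain R where R: "0 < R" "\<And>x. norm x \<le> R * N x" using norm_le_const_polyhedral_norm[OF assms] by blast
  have "norm A \<le> R * \<bar>c\<bar> * C" if "A \<in> projection_sublevel N Y c" for A
  proof (rule norm_blinfun_bound)
    show "0 \<le> R * \<bar>c\<bar> * C" using R C by simp
    fix x
    have "N (A x) \<le> c * N x"
      using that contraction_le_norm[OF n linear_blinfun_apply, of A c]
      by (simp add: projection_sublevel_def op_norm_le_iff[OF assms] linear_blinfun_apply)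
    also have "\<dots> \<le> \<bar>c\<bar> * N x" by (intro mult_right_mono abs_ge_self is_norm_nonneg[OF n])
    also have "\<dots> \<le> \<bar>c\<bar> * (C * norm x)" by (intro mult_left_mono C(2)) simp
    finally have "N (A x) \<le> \<bar>c\<bar> * C * norm x" by (simp add: mult.assoc)
    then have "R * N (A x) \<le> R * (\<bar>c\<bar> * C * norm x)" using R(1) by (intro mult_left_mono) simp_all
    then show "norm (A x) \<le> R * \<bar>c\<bar> * C * norm x" using R(2)[of "A x"] by (simp add: mult.assoc)
  qed
  then show ?thesis by (auto simp: bounded_iff)
qed

lemma proj_const_attained:
  fixes N :: "'a::euclidean_space \<Rightarrow> real"
  assumes "polyhedral_norm N" "subspace Y"
  shows "\<exists>P. is_projection Y P \<and> op_norm N P = proj_const N Y"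
proof -
  define S where "S m = projection_sublevel N Y (proj_const N Y + 1 / real (Suc m))" for m :: nat
  have nonempty: "S m \<noteq> {}" for m
  proof -
    obtain P where P: "is_projection Y P" "op_norm N P < proj_const N Y + 1 / real (Suc m)"
      using exists_projection_op_norm_less[OF assms] by force
    then have "bounded_linear P" by (simp add: is_projection_def linear_conv_bounded_linear)
    then have "Blinfun P \<in> S m"
      using P by (simp add: S_def projection_sublevel_def bounded_linear_Blinfun_apply)
    then show ?thesis by blast
  qed
  have decreasing: "S n \<subseteq> S m" if "m \<le> n" for m n
    unfolding S_def using that by (intro projection_sublevel_mono) (simp add: frac_le)
  have "closed (S m)" "bounded (S m)" for m
    by (simp_all add: S_def closed_projection_sublevel[OF assms] bounded_projection_sublevel[OF assms(1)])
  then obtain A where A: "\<And>m. A \<in> S m"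
    using bounded_closed_nest[of S, OF _ nonempty decreasing] by blast
  then have proj: "is_projection Y A" and le: "\<And>m. op_norm N A \<le> proj_const N Y + 1 / real (Suc m)"
    by (simp_all add: S_def projection_sublevel_def)
  have "op_norm N A \<le> proj_const N Y"
  proof (rule field_le_epsilon)
    fix e :: real assume "0 < e"
    then obtain m where "inverse (real (Suc m)) < e" using reals_Archimedean by blast
    then show "op_norm N A \<le> proj_const N Y + e" using le[of m] by (simp add: inverse_eq_divide)
  qed
  then show ?thesis using proj proj_const_le_op_norm[OF assms(1) proj] by force
qed

definition generic_point :: "('a::real_vector \<Rightarrow> real) \<Rightarrow> 'a \<Rightarrow> bool" where
  "generic_point N p \<longleftrightarrow> (\<forall>S \<subseteq> ext_ball N. span S \<noteq> UNIV \<longrightarrow> p \<notin> span S)"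

lemma generic_point_nonzero:
  assumes "generic_point N (p :: 'a::euclidean_space)"
  shows "p \<noteq> 0"
proof -
  obtain b :: 'a where "b \<in> Basis" using nonempty_Basis by blast
  then have "span {} \<noteq> (UNIV :: 'a set)" using nonzero_Basis by auto
  then show ?thesis using assms unfolding generic_point_def by (metis empty_subsetI span_zero)
qed

lemma generic_point_scaleR:
  assumes "generic_point N p" "c \<noteq> 0"
  shows "generic_point N (c *\<^sub>R p)"
proof -
  have "p \<in> span S" if "c *\<^sub>R p \<in> span S" for S
    using span_mul[OF that, of "inverse c"] assms(2) by simp
  then show ?thesis using assms(1) by (auto simp: generic_point_def)
qed

lemma norming_functional_unique:
  fixes N :: "'a::euclidean_space \<Rightarrow> real"
  assumes pn: "polyhedral_norm N" and y: "generic_point N y" "N y = 1"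
    and f: "f \<in> dual_unit_ball N" "f \<bullet> y = 1" and g: "g \<in> dual_unit_ball N" "g \<bullet> y = 1"
  shows "f = g"
proof (rule ccontr)
  assume "f \<noteq> g"
  have p: "polytope (unit_ball N)" using pn by (simp add: polyhedral_norm_def)
  have le: "f \<bullet> x \<le> 1" "g \<bullet> x \<le> 1" if "x \<in> unit_ball N" for x
    using that f(1) g(1) by (simp_all add: unit_ball_def dual_unit_ball_def)
  then have "(f + g) \<bullet> x \<le> 2" if "x \<in> unit_ball N" for x
    using that by (fastforce simp: inner_add_left)
  define E where "E = unit_ball N \<inter> {x. (f + g) \<bullet> x = 2}"
  have face: "E face_of unit_ball N" unfolding E_def
    by (rule face_of_Int_supporting_hyperplane_le[OF polytope_imp_convex[OF p]]) fact
  have on_E: "f \<bullet> x = 1" "g \<bullet> x = 1" if "x \<in> E" for x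
    using that le[of x] by (simp_all add: E_def inner_add_left)
  define S where "S = {x. x extreme_point_of E}"
  have "E = convex hull S" unfolding S_def
    using face_of_imp_compact[OF polytope_imp_convex[OF p] polytope_imp_compact[OF p] face]
      face_of_imp_convex[OF face]
    by (rule Krein_Milman_Minkowski)
  moreover have "y \<in> E" using f(2) g(2) y(2) by (simp add: E_def unit_ball_def inner_add_left)
  ultimately have "y \<in> span S" using convex_hull_subset_span by blast
  moreover have "S \<subseteq> ext_ball N"
    using extreme_point_of_face[OF face] by (auto simp: S_def ext_ball_def)
  moreover have "span S \<noteq> UNIV"
  proof
    have "S \<subseteq> E" by (auto simp: S_def extreme_point_of_def)
    then have "S \<subseteq> {x. (f - g) \<bullet> x = 0}" using on_E by (auto simp: inner_diff_left)
    then have "span S \<subseteq> {x. (f - g) \<bullet> x = 0}" by (simp add: span_minimal subspace_hyperplane)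
    moreover assume "span S = UNIV"
    ultimately have "f - g \<in> {x. (f - g) \<bullet> x = 0}" by blast
    then show False using \<open>f \<noteq> g\<close> by simp
  qed
  ultimately show False using y(1) by (auto simp: generic_point_def)
qed

lemma norming_functional_invariant:
  fixes N :: "'a::euclidean_space \<Rightarrow> real"
  assumes n: "is_norm N" and f: "f \<in> dual_unit_ball N" "f \<bullet> y = 1"
    and unique: "\<And>g. g \<in> dual_unit_ball N \<Longrightarrow> g \<bullet> y = 1 \<Longrightarrow> g = f"
    and L: "linear L" "\<And>x. N x \<le> 1 \<Longrightarrow> N (L x) \<le> 1" "L y = y"
  shows "f \<bullet> L x = f \<bullet> x"
proof -
  have adjoint: "adjoint L f \<bullet> z = f \<bullet> L z" for z
    using adjoint_works[OF L(1), of z f] by (simp add: inner_commute)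
  have "adjoint L f \<in> dual_unit_ball N"
    using f(1) L(2) by (simp add: dual_unit_ball_def adjoint)
  moreover have "adjoint L f \<bullet> y = 1" using f(2) L(3) by (simp add: adjoint)
  ultimately have "adjoint L f = f" by (rule unique)
  then show ?thesis using adjoint by metis
qed

lemma generic_point_norming_functional:
  fixes N :: "'a::euclidean_space \<Rightarrow> real"
  assumes pn: "polyhedral_norm N" and p: "generic_point N p"
  obtains f where "f \<in> dual_unit_ball N" "f \<bullet> p = N p"
    "\<And>L x. linear L \<Longrightarrow> (\<And>x. N x \<le> 1 \<Longrightarrow> N (L x) \<le> 1) \<Longrightarrow> L p = p \<Longrightarrow> f \<bullet> L x = f \<bullet> x"
proof -
  have n: "is_norm N" using pn by (simp add: polyhedral_norm_def)
  have "p \<noteq> 0" by (rule generic_point_nonzero[OF p])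
  define y where "y = (1 / N p) *\<^sub>R p"
  have Ny: "N y = 1" using is_norm_normalize[OF n \<open>p \<noteq> 0\<close>] by (simp add: y_def)
  have p_eq: "p = N p *\<^sub>R y" using is_norm_pos[OF n \<open>p \<noteq> 0\<close>] by (simp add: y_def)
  have "generic_point N y"
    using generic_point_scaleR[OF p] is_norm_pos[OF n \<open>p \<noteq> 0\<close>] by (simp add: y_def)
  obtain f where f: "f \<in> dual_unit_ball N" "f \<bullet> y = 1" using exists_norming_functional[OF n Ny] by blast
  have unique: "g = f" if "g \<in> dual_unit_ball N" "g \<bullet> y = 1" for g
    using norming_functional_unique[OF pn \<open>generic_point N y\<close> Ny that f] .
  show ?thesis
  proof (rule that[OF f(1)])
    show "f \<bullet> p = N p" by (subst p_eq) (simp add: f(2))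
    fix L x assume L: "linear L" "\<And>x. N x \<le> 1 \<Longrightarrow> N (L x) \<le> 1" "L p = p"
    have "L y = y" using L(1,3) by (simp add: y_def linear_scale)
    then show "f \<bullet> L x = f \<bullet> x" using norming_functional_invariant[OF n f unique L(1,2)] by blast
  qed
qed

lemma in_gen_pos_not_subset:
  fixes Y T :: "'a::euclidean_space set"
  assumes "in_gen_pos Y T" "subspace T" "dim T < DIM('a)" "1 \<le> dim Y"
  shows "\<not> Y \<subseteq> T"
proof
  assume "Y \<subseteq> T"
  then have "span (Y \<union> T) = T" using assms(2) by (simp add: Un_absorb1 span_eq_iff)
  then show False using assms by (simp add: in_gen_pos_def)
qed

lemma finite_ext_ball_subsets: "polyhedral_norm N \<Longrightarrow> finite {S. S \<subseteq> ext_ball N \<and> P S}"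
proof -
  assume "polyhedral_norm N"
  then obtain V where "finite V" "unit_ball N = convex hull V"
    by (auto simp: polyhedral_norm_def polytope_def)
  then have "finite (ext_ball N)"
    using extreme_point_of_convex_hull by (auto simp: ext_ball_def intro: finite_subset)
  then show ?thesis by (rule rev_finite_subset[OF finite_Pow_iff[THEN iffD2]]) blast
qed

lemma finite_line_inter_subspace:
  assumes T: "subspace T" and "z \<notin> T"
  shows "finite {t :: real. z + t *\<^sub>R u \<in> T}"
proof -
  have "a = b" if "z + a *\<^sub>R u \<in> T" "z + b *\<^sub>R u \<in> T" for a b
  proof (rule ccontr)
    assume "a \<noteq> b"
    have "(a - b) *\<^sub>R u \<in> T" using subspace_diff[OF T that] by (simp add: algebra_simps)
    then have "u \<in> T"
      using subspace_mul[OF T, of "(a - b) *\<^sub>R u" "inverse (a - b)"] \<open>a \<noteq> b\<close> by simp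
    then have "z \<in> T" using subspace_diff[OF T that(1) subspace_mul[OF T, of u a]] by simp
    then show False using \<open>z \<notin> T\<close> by blast
  qed
  then have "{t. z + t *\<^sub>R u \<in> T} \<subseteq> {a}" if "z + a *\<^sub>R u \<in> T" for a using that by blast
  then show ?thesis by (cases "{t. z + t *\<^sub>R u \<in> T} = {}") (auto intro: finite_subset)
qed

lemma subspace_not_covered_by_finitely_many:
  fixes Y :: "'a::real_vector set"
  assumes "finite F" "subspace Y" "\<And>T. T \<in> F \<Longrightarrow> subspace T \<and> \<not> Y \<subseteq> T"
  shows "\<exists>z\<in>Y. \<forall>T\<in>F. z \<notin> T"
  using assms(1,3)
proof (induction F rule: finite_induct)
  case empty
  then show ?case using subspace_0[OF assms(2)] by blast
next
  case (insert T F)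
  then obtain z where z: "z \<in> Y" "\<forall>T'\<in>F. z \<notin> T'" by blast
  obtain w where w: "w \<in> Y" "w \<notin> T" using insert.prems by blast
  show ?case
  proof (cases "z \<in> T")
    case False
    then show ?thesis using z by blast
  next
    case True
    \<comment> \<open>the points z + c w with c \<noteq> 0 avoid T, and each T' in F contains at most one of them\<close>
    have "finite {t. z + t *\<^sub>R w \<in> T'}" if "T' \<in> F" for T'
      using finite_line_inter_subspace insert.prems that z(2) by blast
    then have "finite (insert 0 (\<Union>T'\<in>F. {t. z + t *\<^sub>R w \<in> T'}))"
      using insert.hyps(1) by blast
    then obtain c where "c \<notin> insert 0 (\<Union>T'\<in>F. {t. z + t *\<^sub>R w \<in> T'})"
      using ex_new_if_finite[OF infinite_UNIV_char_0] by blast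
    then have c: "c \<noteq> 0" "\<forall>T'\<in>F. z + c *\<^sub>R w \<notin> T'" by auto
    have "subspace T" using insert.prems by blast
    have "z + c *\<^sub>R w \<notin> T"
    proof
      assume "z + c *\<^sub>R w \<in> T"
      then have "(z + c *\<^sub>R w) - z \<in> T" using subspace_diff[OF \<open>subspace T\<close> _ True] by blast
      then have "c *\<^sub>R w \<in> T" by simp
      then show False
        using subspace_mul[OF \<open>subspace T\<close>, of "c *\<^sub>R w" "inverse c"] c(1) w(2) by simp
    qed
    moreover have "z + c *\<^sub>R w \<in> Y" using z(1) w(1) assms(2) by (simp add: subspace_add subspace_mul)
    ultimately show ?thesis using c(2) by blast
  qed
qed

lemma exists_generic_point:
  fixes N :: "'a::euclidean_space \<Rightarrow> real"
  assumes "polyhedral_norm N" "subspace Y" "1 \<le> dim Y" "subspace_gen_pos N Y"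
  shows "\<exists>z\<in>Y. generic_point N z"
proof -
  let ?F = "span ` {S. S \<subseteq> ext_ball N \<and> span S \<noteq> UNIV}"
  have "finite ?F" using finite_ext_ball_subsets[OF assms(1)] by (rule finite_imageI)
  moreover have "subspace T \<and> \<not> Y \<subseteq> T" if "T \<in> ?F" for T
  proof -
    obtain S where S: "S \<subseteq> ext_ball N" "span S \<noteq> UNIV" "T = span S" using \<open>T \<in> ?F\<close> by blast
    have "dim (span S) < DIM('a)"
      using S(2) dim_eq_full[of S] dim_subset_UNIV[of S] by (simp add: dim_span)
    moreover have "in_gen_pos Y (span S)" using assms(4) S(1) by (simp add: subspace_gen_pos_def)
    ultimately show ?thesis
      using in_gen_pos_not_subset[of Y "span S"] assms(3) S(3) by (simp add: subspace_span)
  qed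
  ultimately have "\<exists>z\<in>Y. \<forall>T\<in>?F. z \<notin> T"
    by (rule subspace_not_covered_by_finitely_many[OF _ assms(2)])
  then show ?thesis by (auto simp: generic_point_def)
qed

lemma finite_nongeneric_on_line:
  fixes N :: "'a::euclidean_space \<Rightarrow> real"
  assumes "polyhedral_norm N" "generic_point N z"
  shows "finite {t. \<not> generic_point N (z + t *\<^sub>R u)}"
proof -
  let ?\<S> = "{S. S \<subseteq> ext_ball N \<and> span S \<noteq> UNIV}"
  have "finite ?\<S>" by (rule finite_ext_ball_subsets[OF assms(1)])
  moreover have "finite {t. z + t *\<^sub>R u \<in> span S}" if "S \<in> ?\<S>" for S
  proof -
    have "z \<notin> span S" using assms(2) that by (simp add: generic_point_def)
    then show ?thesis by (rule finite_line_inter_subspace[OF subspace_span])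
  qed
  moreover have "{t. \<not> generic_point N (z + t *\<^sub>R u)} = (\<Union>S\<in>?\<S>. {t. z + t *\<^sub>R u \<in> span S})"
    by (auto simp: generic_point_def)
  ultimately show ?thesis by simp
qed

lemma contractive_projection_unique:
  fixes N :: "'a::euclidean_space \<Rightarrow> real"
  assumes pn: "polyhedral_norm N" and Y: "subspace Y" and z: "z \<in> Y" "generic_point N z"
    and P: "is_projection Y P" "\<And>x. N x \<le> 1 \<Longrightarrow> N (P x) \<le> 1"
    and Q: "is_projection Y Q" "\<And>x. N x \<le> 1 \<Longrightarrow> N (Q x) \<le> 1"
  shows "P = Q"
proof
  fix x
  have n: "is_norm N" using pn by (simp add: polyhedral_norm_def)
  define u where "u = P x - Q x"
  show "P x = Q x"
  proof (rule ccontr)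
    assume "P x \<noteq> Q x"
    then have "0 < N u" using is_norm_pos[OF n] by (simp add: u_def)
    have "infinite ({2 * N z / N u<..} - {t. \<not> generic_point N (z + t *\<^sub>R u)})"
      using Diff_infinite_finite[OF finite_nongeneric_on_line[OF pn z(2)] infinite_Ioi] .
    from infinite_imp_nonempty[OF this]
    obtain t where "t \<in> {2 * N z / N u<..} - {t. \<not> generic_point N (z + t *\<^sub>R u)}"
      by blast
    then have t: "2 * N z / N u < t" "generic_point N (z + t *\<^sub>R u)" by simp_all
    define p where "p = z + t *\<^sub>R u"
    have "u \<in> Y" using P(1) Q(1) subspace_diff[OF Y] by (simp add: u_def is_projection_def)
    then have "p \<in> Y" using subspace_add[OF Y z(1) subspace_mul[OF Y]] by (simp add: p_def)
    obtain f where f: "f \<in> dual_unit_ball N" "f \<bullet> p = N p"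
      and invariant: "\<And>L x. linear L \<Longrightarrow> (\<And>x. N x \<le> 1 \<Longrightarrow> N (L x) \<le> 1) \<Longrightarrow> L p = p \<Longrightarrow>
        f \<bullet> L x = f \<bullet> x"
      using generic_point_norming_functional[OF pn t(2)[folded p_def]] by blast
    have "linear P" "P p = p" "linear Q" "Q p = p"
      using P(1) Q(1) \<open>p \<in> Y\<close> by (simp_all add: is_projection_def)
    then have "f \<bullet> P x = f \<bullet> x" "f \<bullet> Q x = f \<bullet> x"
      using invariant[of P x] invariant[of Q x] P(2) Q(2) by simp_all
    then have "N p = f \<bullet> z" using f(2) by (simp add: p_def u_def inner_add_right inner_diff_right)
    also have "\<dots> \<le> N z" by (rule dual_unit_ball_inner_le[OF n f(1)])
    finally have "N p \<le> N z" .
    have "t * N u \<le> N (t *\<^sub>R u)" using is_norm_scaleR[OF n] \<open>0 < N u\<close> by simp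
    also have "\<dots> = N (p + - z)" by (simp add: p_def)
    also have "\<dots> \<le> N p + N (- z)" by (rule is_norm_triangle[OF n])
    also have "\<dots> = N p + N z" by (simp add: is_norm_minus[OF n])
    finally have "t * N u \<le> N p + N z" .
    moreover have "2 * N z < t * N u" using t(1) \<open>0 < N u\<close> by (simp add: pos_divide_less_eq)
    ultimately show False using \<open>N p \<le> N z\<close> by linarith
  qed
qed

theorem mainTheorem7:
  fixes N :: "real^'n \<Rightarrow> real" and Y :: "(real^'n) set"
  assumes "polyhedral_norm N"
    and "subspace Y"
    and "1 \<le> dim Y" and "dim Y \<le> CARD('n) - 1"
    and "subspace_gen_pos N Y"
    and "proj_const N Y = 1"
  shows "\<exists>!P. is_projection Y P \<and> op_norm N P = 1"
proof (rule ex_ex1I)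
  show "\<exists>P. is_projection Y P \<and> op_norm N P = 1"
    using proj_const_attained[OF assms(1,2)] assms(6) by simp
next
  obtain z where z: "z \<in> Y" "generic_point N z"
    using exists_generic_point[OF assms(1,2,3,5)] by blast
  have contraction: "N (P x) \<le> 1" if "is_projection Y P \<and> op_norm N P = 1" "N x \<le> 1" for P x
    using that op_norm_le_iff[OF assms(1), of P 1] by (simp add: is_projection_def)
  fix P Q
  assume "is_projection Y P \<and> op_norm N P = 1" "is_projection Y Q \<and> op_norm N Q = 1"
  then show "P = Q"
    using contractive_projection_unique[OF assms(1,2) z] contraction by blast
qed

end
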